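(* For $n\ge2$, with $\widetilde Q_n$, $\lambda_\pm$, the double suspension $\Sigma^2$ and $\iota\colon\Sigma^2\widetilde Q_n\to\widetilde Q_{n+1}$ as in the context, the homomorphism $\iota_*\circ\Sigma^2\colon\pi_{2n-1}(\widetilde Q_n)\to\pi_{2n+1}(\widetilde Q_{n+1})$ maps $\lambda_+\mapsto\lambda_+$ and $\lambda_-\mapsto\lambda_-$.
   Context: $\widetilde Q_n=\{(a,b)\in\mathbb R^{2n}\oplus\mathbb R^{2n}: |a|=|b|=1,\ \langle a,b\rangle=0\}$ (simply connected). For a subspace $S\subset V$ of a real vector space, $\Sigma^2S=\{(\sqrt{1-|X|^2}\,v,X): v\in S, X\in\mathbb R^2, |X|\le1\}\subset V\oplus\mathbb R^2$; in particular $\Sigma^2S^{2n-1}=S^{2n+1}\subset\mathbb R^{2n+2}$, and for $f\colon S^{2n-1}\to S$ one sets $\Sigma^2f(\sqrt{1-|X|^2}u,X)=(\sqrt{1-|X|^2}f(u),X)$, defining $\Sigma^2\colon\pi_{2n-1}(S)\to\pi_{2n+1}(\Sigma^2S)$. Let $j_+$ be the orientation-compatible orthogonal complex structure on $\mathbb R^2$, and define $\iota\colon\Sigma^2\widetilde Q_n\to\widetilde Q_{n+1}$ by $(\sqrt{1-|X|^2}(a,b),X)\mapsto\big((\sqrt{1-|X|^2}a,X),(\sqrt{1-|X|^2}b,-j_+X)\big)$. Spheres $S^{m}\subset\mathbb R^{m+1}$ carry the standard boundary orientation. $\lambda_+\in\pi_{2n-1}(\widetilde Q_n)$ is the class of $a\mapsto(a,-J_+a)$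 for an orthogonal complex structure $J_+$ on $\mathbb R^{2n}$ compatible with the orientation, and $\lambda_-$ is minus the class of $a\mapsto(a,-J_-a)$ for an orthogonal complex structure $J_-$ compatible with the opposite orientation (both independent of the choice). *)

theory Defs
  imports "HOL-Analysis.Analysis"
begin

text \<open>Vectors of R^m are encoded as functions nat => real vanishing at indices >= m
  (the product topology on nat => real restricts to the Euclidean topology there).
  Linear maps on R^m are encoded as matrices nat => nat => real (entries with indices < m).\<close>

type_synonym vec = "nat \<Rightarrow> real"

definition Rn :: "nat \<Rightarrow> vec set" where
  "Rn m = {x. \<forall>i\<ge>m. x i = 0}"

definition ip :: "nat \<Rightarrow> vec \<Rightarrow> vec \<Rightarrow> real" where
  "ip m x y = (\<Sum>i<m. x i * y i)"

definition Sph :: "nat \<Rightarrow> vec set" where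
  "Sph m = {x \<in> Rn m. ip m x x = 1}"

definition Qt :: "nat \<Rightarrow> (vec \<times> vec) set" where
  "Qt n = {(a, b). a \<in> Sph (2*n) \<and> b \<in> Sph (2*n) \<and> ip (2*n) a b = 0}"

definition mv :: "nat \<Rightarrow> (nat \<Rightarrow> nat \<Rightarrow> real) \<Rightarrow> vec \<Rightarrow> vec" where
  "mv m A x = (\<lambda>i. if i < m then (\<Sum>j<m. A i j * x j) else 0)"

definition ocs :: "nat \<Rightarrow> (nat \<Rightarrow> nat \<Rightarrow> real) \<Rightarrow> bool" where
  "ocs m J \<longleftrightarrow>
     (\<forall>i<m. \<forall>j<m. (\<Sum>k<m. J i k * J k j) = (if i = j then -1 else 0)) \<and>
     (\<forall>i<m. \<forall>j<m. (\<Sum>k<m. J k i * J k j) = (if i = j then 1 else 0))"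

definition detm :: "nat \<Rightarrow> (nat \<Rightarrow> nat \<Rightarrow> real) \<Rightarrow> real" where
  "detm m A = (\<Sum>p\<in>{p. p permutes {..<m}}. of_int (sign p) * (\<Prod>i<m. A i (p i)))"

definition cbasis_mat :: "nat \<Rightarrow> (nat \<Rightarrow> nat \<Rightarrow> real) \<Rightarrow> (nat \<Rightarrow> vec) \<Rightarrow> (nat \<Rightarrow> nat \<Rightarrow> real)" where
  "cbasis_mat m J w = (\<lambda>i k. (if even k then w (k div 2) else mv m J (w (k div 2))) i)"

text \<open>J compatible with the standard orientation of R^m: some basis of the form
  (w_1, J w_1, ..., w_k, J w_k) is positively oriented; compatible with the opposite
  orientation: some such basis is negatively oriented.\<close>
definition pos_compat :: "nat \<Rightarrow> (nat \<Rightarrow> nat \<Rightarrow> real) \<Rightarrow> bool" where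
  "pos_compat m J \<longleftrightarrow> (\<exists>w. detm m (cbasis_mat m J w) > 0)"

definition neg_compat :: "nat \<Rightarrow> (nat \<Rightarrow> nat \<Rightarrow> real) \<Rightarrow> bool" where
  "neg_compat m J \<longleftrightarrow> (\<exists>w. detm m (cbasis_mat m J w) < 0)"

definition lam :: "nat \<Rightarrow> (nat \<Rightarrow> nat \<Rightarrow> real) \<Rightarrow> vec \<Rightarrow> vec \<times> vec" where
  "lam n J a = (a, (\<lambda>i. - mv (2*n) J a i))"

text \<open>Reflection in the first coordinate (a degree -1 self-map of every sphere);
  precomposition with it represents the negative of a homotopy class.\<close>
definition refl0 :: "vec \<Rightarrow> vec" where
  "refl0 x = x(0 := - x 0)"

text \<open>Double suspension of f : S^(2n-1) -> Q~_n \<subseteq> R^(2n) (+) R^(2n), as a map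
  S^(2n+1) -> (R^(2n) (+) R^(2n)) (+) R^2, where R^(2n+2) = R^(2n) (+) R^2 with the
  R^2 coordinates at indices 2n, 2n+1.  A point y of S^(2n+1) is (s u, X) with
  X = (y_2n, y_(2n+1)), s = sqrt(1-|X|^2).  (If s = 0 the value is ((0,0),X).)\<close>
definition sigma2 :: "nat \<Rightarrow> (vec \<Rightarrow> vec \<times> vec) \<Rightarrow> vec \<Rightarrow> (vec \<times> vec) \<times> (real \<times> real)" where
  "sigma2 n f y =
     (let X1 = y (2*n); X2 = y (2*n+1); s = sqrt (1 - X1\<^sup>2 - X2\<^sup>2);
          u = (\<lambda>i. if i < 2*n then y i / s else 0)
      in (((\<lambda>i. s * fst (f u) i), (\<lambda>i. s * snd (f u) i)), (X1, X2)))"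

definition emb :: "nat \<Rightarrow> vec \<Rightarrow> real \<Rightarrow> real \<Rightarrow> vec" where
  "emb n v a b = (\<lambda>i. if i < 2*n then v i else if i = 2*n then a
                        else if i = 2*n+1 then b else 0)"

text \<open>iota : Sigma^2 Q~_n -> Q~_(n+1), ((p,q),X) |-> ((p,X),(q,-j_+ X)), where
  j_+(X1,X2) = (-X2,X1), so -j_+ X = (X2,-X1).\<close>
definition iota :: "nat \<Rightarrow> (vec \<times> vec) \<times> (real \<times> real) \<Rightarrow> vec \<times> vec" where
  "iota n z = (case z of ((p, q), (X1, X2)) \<Rightarrow> (emb n p X1 X2, emb n q X2 (- X1)))"

end

theory Submission
  imports Defs "Jordan_Normal_Form.Determinant"
begin

text \<open>Let \<open>J\<^sub>0\<close> be the standard complex structure \<open>(x\<^sub>0, x\<^sub>1, \<dots>) \<mapsto> (-x\<^sub>1, x\<^sub>0, \<dots>)\<close> and call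
  \<open>W\<close> an intertwiner of an orthogonal complex structure \<open>J\<close> if \<open>W J\<^sub>0 = J W\<close>; the matrix with
  columns \<open>w\<^sub>0, J w\<^sub>0, w\<^sub>1, J w\<^sub>1, \<dots>\<close> is one.  For invertible \<open>W\<close> the vectors \<open>-J a\<close> and
  \<open>-J W W\<^sup>T a = -W J\<^sub>0 W\<^sup>T a\<close> are joined by a segment avoiding \<open>0\<close>, because \<open>W W\<^sup>T\<close> is
  positive definite; after normalisation this is a homotopy from \<open>\<lambda>\<^sub>J\<close> to
  \<open>a \<mapsto> (a, -W J\<^sub>0 W\<^sup>T a / |W J\<^sub>0 W\<^sup>T a|)\<close>.  The latter map depends continuously on \<open>W \<in> GL\<close>,
  so \<open>\<lambda>\<^sub>J \<simeq> \<lambda>\<^sub>K\<close> as soon as intertwiners of \<open>J\<close> and \<open>K\<close> have determinants of the same sign,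
  the two components of \<open>GL\<close> being path-connected by row reduction.  Finally
  \<open>\<iota> \<circ> \<Sigma>\<^sup>2 \<lambda>\<^sub>J\<close> is pointwise equal to \<open>\<lambda>\<^bsub>J \<oplus> j\<^sub>+\<^esub>\<close>, and \<open>W \<oplus> 1\<close> intertwines \<open>J \<oplus> j\<^sub>+\<close>
  with \<open>det (W \<oplus> 1) = det W\<close>.\<close>

section \<open>Matrices on initial segments of \<open>\<nat>\<close>\<close>

type_synonym rmat = "nat \<Rightarrow> nat \<Rightarrow> real"

definition idm :: "nat \<Rightarrow> rmat" where
  "idm N = (\<lambda>i j. if i < N \<and> i = j then 1 else 0)"

definition trm :: "rmat \<Rightarrow> rmat" where
  "trm A = (\<lambda>i j. A j i)"

definition GLm :: "nat \<Rightarrow> rmat set" where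
  "GLm N = {A. detm N A \<noteq> 0}"

definition row_add :: "real \<Rightarrow> nat \<Rightarrow> nat \<Rightarrow> rmat \<Rightarrow> rmat" where
  "row_add c k l A = (\<lambda>i j. if i = k then A i j + c * A l j else A i j)"

definition row_scale :: "nat \<Rightarrow> real \<Rightarrow> rmat \<Rightarrow> rmat" where
  "row_scale k c A = (\<lambda>i j. if i = k then c * A i j else A i j)"

definition block2 :: "nat \<Rightarrow> rmat \<Rightarrow> real \<Rightarrow> real \<Rightarrow> real \<Rightarrow> real \<Rightarrow> rmat" where
  "block2 N A b00 b01 b10 b11 = (\<lambda>i j. if i < N \<and> j < N then A i j
     else if i = N \<and> j = N then b00 else if i = N \<and> j = Suc N then b01
     else if i = Suc N \<and> j = N then b10 else if i = Suc N \<and> j = Suc N then b11 else 0)"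

definition to_mat :: "nat \<Rightarrow> rmat \<Rightarrow> real mat" where
  "to_mat N A = mat N N (\<lambda>(i, j). A i j)"

lemma to_mat_carrier [simp]: "to_mat N A \<in> carrier_mat N N"
  by (simp add: to_mat_def)

lemma detm_eq_det: "detm N A = det (to_mat N A)"
  unfolding detm_def det_def to_mat_def by (simp add: atLeast0LessThan)

lemma detm_cong:
  assumes "\<And>i j. i < N \<Longrightarrow> j < N \<Longrightarrow> A i j = B i j"
  shows "detm N A = detm N B"
proof -
  have "to_mat N A = to_mat N B" using assms by (auto simp: to_mat_def)
  then show ?thesis by (simp add: detm_eq_det)
qed

lemma detm_trm: "detm N (trm A) = detm N A"
proof -
  have "to_mat N (trm A) = transpose_mat (to_mat N A)"
    by (rule eq_matI) (auto simp: to_mat_def trm_def)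
  then show ?thesis by (simp add: detm_eq_det det_transpose[OF to_mat_carrier])
qed

lemma detm_idm: "detm N (idm N) = 1"
proof -
  have "to_mat N (idm N) = 1\<^sub>m N" by (rule eq_matI) (auto simp: to_mat_def idm_def)
  then show ?thesis by (simp add: detm_eq_det)
qed

lemma detm_row_add:
  assumes "k < N" "l < N" "k \<noteq> l"
  shows "detm N (row_add c k l A) = detm N A"
proof -
  have "to_mat N (row_add c k l A) = addrow c k l (to_mat N A)"
    by (rule eq_matI) (use assms in \<open>auto simp: to_mat_def row_add_def\<close>)
  then show ?thesis using assms det_addrow[of l N k "to_mat N A" c] by (simp add: detm_eq_det)
qed

lemma detm_row_scale:
  assumes "k < N"
  shows "detm N (row_scale k c A) = c * detm N A"
proof -
  have "to_mat N (row_scale k c A) = multrow k c (to_mat N A)"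
    by (rule eq_matI) (use assms in \<open>auto simp: to_mat_def row_scale_def\<close>)
  then show ?thesis using assms det_multrow[of k N "to_mat N A" c] by (simp add: detm_eq_det)
qed

lemma detm_block2_id: "detm (Suc (Suc N)) (block2 N A 1 0 0 1) = detm N A"
proof -
  have "to_mat (Suc (Suc N)) (block2 N A 1 0 0 1)
      = four_block_mat (to_mat N A) (0\<^sub>m N 2) (0\<^sub>m 2 N) (1\<^sub>m 2)"
    by (rule eq_matI) (auto simp: to_mat_def block2_def)
  then show ?thesis
    using det_four_block_mat_upper_right_zero[of "to_mat N A" N "0\<^sub>m N 2" 2 "0\<^sub>m 2 N" "1\<^sub>m 2"]
    by (simp add: detm_eq_det)
qed

lemma mv_cong: "(\<And>j. j < N \<Longrightarrow> x j = y j) \<Longrightarrow> mv N A x = mv N A y"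
  unfolding mv_def by (intro ext) auto

lemma mv_Rn [simp]: "mv N A x \<in> Rn N"
  by (simp add: mv_def Rn_def)

lemma detm_nonzero_mv_eq_0:
  assumes "detm N A \<noteq> 0" "x \<in> Rn N" "mv N A x = (\<lambda>_. 0)"
  shows "x = (\<lambda>_. 0)"
proof -
  have "to_mat N A *\<^sub>v vec N x = vec N (mv N A x)"
    by (rule eq_vecI) (auto simp: to_mat_def mv_def scalar_prod_def row_def lessThan_atLeast0)
  then have "to_mat N A *\<^sub>v vec N x = 0\<^sub>v N" using assms(3) by auto
  then have "vec N x = 0\<^sub>v N"
    using assms(1) det_0_iff_vec_prod_zero[OF to_mat_carrier, of N A]
    by (metis detm_eq_det vec_carrier)
  then have "x i = 0" for i
    using assms(2) by (cases "i < N") (auto simp: Rn_def dest: arg_cong[of _ _ "\<lambda>v. v $ i"])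
  then show ?thesis by auto
qed

section \<open>Orthogonal complex structures and intertwiners\<close>

lemma sum_lessThan_double:
  "(\<Sum>l<2*m. f l) = (\<Sum>p<m. f (2*p) + f (2*p+1))" for f :: "nat \<Rightarrow> 'a::comm_monoid_add"
  by (induction m) (simp_all add: sum.distrib add_ac)

lemma ip_commute: "ip N x y = ip N y x"
  by (simp add: ip_def mult.commute)

lemma ip_linear_right: "ip N x (\<lambda>i. a * y i + b * z i) = a * ip N x y + b * ip N x z"
  by (simp add: ip_def sum.distrib sum_distrib_left algebra_simps)

lemma ip_uminus_right: "ip N x (\<lambda>i. - y i) = - ip N x y"
  by (simp add: ip_def sum_negf)

lemma ip_uminus_uminus: "ip N (\<lambda>i. - x i) (\<lambda>i. - x i) = ip N x x"
  by (simp add: ip_def)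

lemma ip_divide_right: "ip N x (\<lambda>i. y i / c) = ip N x y / c"
  by (simp add: ip_def sum_divide_distrib)

lemma ip_cong:
  "(\<And>i. i < N \<Longrightarrow> x i = x' i) \<Longrightarrow> (\<And>i. i < N \<Longrightarrow> y i = y' i) \<Longrightarrow> ip N x y = ip N x' y'"
  by (simp add: ip_def)

lemma ip_self_nonneg: "ip N x x \<ge> 0"
  by (simp add: ip_def sum_nonneg)

lemma ip_self_eq_0D:
  assumes "ip N x x = 0" "i < N"
  shows "x i = 0"
proof -
  have "\<forall>i\<in>{..<N}. x i * x i = 0"
    using assms(1) unfolding ip_def by (subst sum_nonneg_eq_0_iff[symmetric]) auto
  then show ?thesis using assms(2) by auto
qed

lemma Rn_ip_self_eq_0:
  assumes "x \<in> Rn N" "ip N x x = 0"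
  shows "x = (\<lambda>_. 0)"
proof
  fix i
  show "x i = 0"
    using ip_self_eq_0D[OF assms(2)] assms(1) by (cases "i < N") (auto simp: Rn_def)
qed

lemma ip_Suc_Suc: "ip (Suc (Suc N)) x y = ip N x y + x N * y N + x (Suc N) * y (Suc N)"
  by (simp add: ip_def)

lemma mv_linear: "mv N A (\<lambda>i. a * x i + b * y i) = (\<lambda>i. a * mv N A x i + b * mv N A y i)"
  by (rule ext) (simp add: mv_def sum.distrib sum_distrib_left algebra_simps)

lemma mv_scale: "mv N A (\<lambda>i. c * x i) = (\<lambda>i. c * mv N A x i)"
  by (rule ext) (simp add: mv_def sum_distrib_left mult_ac)

lemma ip_mv_right: "ip N x (mv N A y) = ip N (mv N (trm A) x) y"
proof -
  have "ip N x (mv N A y) = (\<Sum>i<N. \<Sum>j<N. x i * A i j * y j)"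
    by (simp add: ip_def mv_def sum_distrib_left mult.assoc)
  also have "\<dots> = (\<Sum>j<N. \<Sum>i<N. x i * A i j * y j)" by (rule sum.swap)
  also have "\<dots> = ip N (mv N (trm A) x) y"
    by (simp add: ip_def mv_def trm_def sum_distrib_left mult_ac)
  finally show ?thesis .
qed

lemma ocs_ip_mv:
  assumes "ocs N J"
  shows "ip N (mv N J x) (mv N J y) = ip N x y"
proof -
  have orth: "\<And>j l. j < N \<Longrightarrow> l < N \<Longrightarrow> (\<Sum>i<N. J i j * J i l) = (if j = l then 1 else 0)"
    using assms unfolding ocs_def by blast
  have "ip N (mv N J x) (mv N J y) = (\<Sum>i<N. \<Sum>j<N. \<Sum>l<N. J i j * x j * (J i l * y l))"
    by (simp add: ip_def mv_def sum_product)
  also have "\<dots> = (\<Sum>j<N. \<Sum>i<N. \<Sum>l<N. J i j * x j * (J i l * y l))" by (rule sum.swap)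
  also have "\<dots> = (\<Sum>j<N. \<Sum>l<N. \<Sum>i<N. J i j * x j * (J i l * y l))"
    by (rule sum.cong[OF refl], rule sum.swap)
  also have "\<dots> = (\<Sum>j<N. \<Sum>l<N. x j * y l * (\<Sum>i<N. J i j * J i l))"
    by (simp add: sum_distrib_left mult_ac)
  also have "\<dots> = (\<Sum>j<N. \<Sum>l<N. x j * y l * (if j = l then 1 else 0))"
    by (intro sum.cong refl) (simp add: orth)
  also have "\<dots> = ip N x y" by (simp add: ip_def if_distrib cong: if_cong)
  finally show ?thesis .
qed

lemma ocs_mv_mv:
  assumes "ocs N J"
  shows "mv N J (mv N J x) = (\<lambda>i. if i < N then - x i else 0)"
proof
  fix i
  have sq: "\<And>i l. i < N \<Longrightarrow> l < N \<Longrightarrow> (\<Sum>j<N. J i j * J j l) = (if i = l then -1 else 0)"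
    using assms unfolding ocs_def by blast
  show "mv N J (mv N J x) i = (if i < N then - x i else 0)"
  proof (cases "i < N")
    case True
    have "mv N J (mv N J x) i = (\<Sum>j<N. \<Sum>l<N. J i j * J j l * x l)"
      using True by (simp add: mv_def sum_distrib_left mult.assoc)
    also have "\<dots> = (\<Sum>l<N. (\<Sum>j<N. J i j * J j l) * x l)"
      by (subst sum.swap) (simp add: sum_distrib_right)
    also have "\<dots> = (\<Sum>l<N. if i = l then - x l else 0)"
      by (rule sum.cong[OF refl]) (simp add: sq True)
    also have "\<dots> = - x i" using True by (simp add: sum.delta)
    finally show ?thesis using True by simp
  qed (simp add: mv_def)
qed

lemma ocs_ip_self_mv:
  assumes "ocs N J"
  shows "ip N x (mv N J x) = 0"
proof -
  have "ip N x (mv N J x) = ip N (mv N J x) (mv N J (mv N J x))"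
    using ocs_ip_mv[OF assms] by simp
  also have "\<dots> = ip N (mv N J x) (\<lambda>i. - x i)"
    by (rule ip_cong) (simp_all add: ocs_mv_mv[OF assms])
  also have "\<dots> = - ip N x (mv N J x)" by (simp add: ip_uminus_right ip_commute)
  finally show ?thesis by simp
qed

definition std_cs :: "nat \<Rightarrow> (nat \<Rightarrow> real) \<Rightarrow> nat \<Rightarrow> real" where
  "std_cs N y = (\<lambda>l. if l < N then (if even l then - y (Suc l) else y (l - 1)) else 0)"

lemma ip_std_cs_std_cs:
  assumes "N = 2*m"
  shows "ip N (std_cs N y) (std_cs N y) = ip N y y"
proof -
  have "ip N (std_cs N y) (std_cs N y) = (\<Sum>p<m. y (2*p+1) * y (2*p+1) + y (2*p) * y (2*p))"
    unfolding ip_def assms sum_lessThan_double by (rule sum.cong) (auto simp: std_cs_def)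
  also have "\<dots> = ip N y y" unfolding ip_def assms sum_lessThan_double by (simp add: add.commute)
  finally show ?thesis .
qed

lemma ip_std_cs:
  assumes "N = 2*m"
  shows "ip N y (std_cs N y) = 0"
  unfolding ip_def assms sum_lessThan_double by (rule sum.neutral) (auto simp: std_cs_def)

definition intertwines :: "nat \<Rightarrow> rmat \<Rightarrow> rmat \<Rightarrow> bool" where
  "intertwines N J W \<longleftrightarrow> (\<forall>y. mv N W (std_cs N y) = mv N J (mv N W y))"

lemma intertwinesI_columns:
  assumes N: "N = 2*m" and J: "ocs N J"
    and col: "\<And>p i. p < m \<Longrightarrow> i < N \<Longrightarrow> W i (2*p+1) = mv N J (\<lambda>j. W j (2*p)) i"
  shows "intertwines N J W"
  unfolding intertwines_def
proof (intro allI ext)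
  fix y i
  show "mv N W (std_cs N y) i = mv N J (mv N W y) i"
  proof (cases "i < N")
    case True
    have col_odd: "(\<Sum>j<N. J i j * W j (2*p)) = W i (Suc (2*p))" if "p < m" for p
      using col[OF that True] True by (simp add: mv_def)
    have col_even: "(\<Sum>j<N. J i j * W j (Suc (2*p))) = - W i (2*p)" if "p < m" for p
    proof -
      have "(\<Sum>j<N. J i j * W j (Suc (2*p))) = mv N J (mv N J (\<lambda>j. W j (2*p))) i"
        using True col[OF that] by (simp add: mv_def)
      then show ?thesis using True by (simp add: ocs_mv_mv[OF J])
    qed
    have "mv N W (std_cs N y) i = (\<Sum>p<m. W i (2*p) * (- y (2*p+1)) + W i (2*p+1) * y (2*p))"
      using True unfolding mv_def N sum_lessThan_double by (simp add: std_cs_def)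
    also have "\<dots> = (\<Sum>p<m. (\<Sum>j<N. J i j * W j (2*p)) * y (2*p)
                          + (\<Sum>j<N. J i j * W j (2*p+1)) * y (2*p+1))"
      by (rule sum.cong[OF refl]) (simp add: col_odd col_even)
    also have "\<dots> = (\<Sum>k<N. (\<Sum>j<N. J i j * W j k) * y k)"
      unfolding N sum_lessThan_double ..
    also have "\<dots> = (\<Sum>k<N. \<Sum>j<N. J i j * W j k * y k)"
      by (simp add: sum_distrib_right)
    also have "\<dots> = mv N J (mv N W y) i"
      using True by (subst sum.swap) (simp add: mv_def sum_distrib_left mult.assoc)
    finally show ?thesis .
  qed (simp add: mv_def)
qed

lemma intertwines_cbasis_mat: "N = 2*m \<Longrightarrow> ocs N J \<Longrightarrow> intertwines N J (cbasis_mat N J w)"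
  by (rule intertwinesI_columns) (simp_all add: cbasis_mat_def)

section \<open>Homotopies of sections of \<open>Q~\<^sub>m\<close>\<close>

definition normalized :: "nat \<Rightarrow> (nat \<Rightarrow> real) \<Rightarrow> nat \<Rightarrow> real" where
  "normalized N v = (\<lambda>i. v i / sqrt (ip N v v))"

lemma normalized_in_Sph:
  assumes "v \<in> Rn N" "ip N v v > 0"
  shows "normalized N v \<in> Sph N"
proof -
  have "ip N (normalized N v) (normalized N v) = ip N v v / (sqrt (ip N v v) * sqrt (ip N v v))"
    by (simp add: ip_def normalized_def sum_divide_distrib)
  then show ?thesis using assms by (simp add: Sph_def Rn_def normalized_def)
qed

lemma homotopic_with_canon_intro:
  fixes h :: "real \<times> 'a::topological_space \<Rightarrow> 'b::topological_space"
  assumes "continuous_on ({0..1} \<times> S) h" "h ` ({0..1} \<times> S) \<subseteq> T"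
    "\<And>x. x \<in> S \<Longrightarrow> h (0, x) = f x" "\<And>x. x \<in> S \<Longrightarrow> h (1, x) = g x"
  shows "homotopic_with_canon (\<lambda>_. True) S T f g"
proof -
  have "prod_topology (top_of_set {0..1::real}) (top_of_set S) = top_of_set ({0..1} \<times> S)"
    by (simp add: subtopology_Times[symmetric])
  then show ?thesis
    using assms by (subst homotopic_with) (auto simp: image_subset_iff intro!: exI[of _ h])
qed

lemma continuous_on_mv:
  assumes "\<And>i j. continuous_on S (\<lambda>z. A z i j)" "continuous_on S x"
  shows "continuous_on S (\<lambda>z. mv N (A z) (x z))"
proof (rule continuous_on_coordinatewise_then_product)
  fix i
  have "continuous_on S (\<lambda>z. \<Sum>j<N. A z i j * x z j)"
    by (intro continuous_intros assms continuous_on_product_then_coordinatewise[OF assms(2)])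
  then show "continuous_on S (\<lambda>z. mv N (A z) (x z) i)" by (cases "i < N") (simp_all add: mv_def)
qed

lemma continuous_on_std_cs:
  assumes "continuous_on S x"
  shows "continuous_on S (\<lambda>z. std_cs N (x z))"
proof (rule continuous_on_coordinatewise_then_product)
  fix l
  have "continuous_on S (\<lambda>z. x z j)" for j
    by (rule continuous_on_product_then_coordinatewise[OF assms])
  then show "continuous_on S (\<lambda>z. std_cs N (x z) l)"
    by (cases "l < N"; cases "even l") (simp_all add: std_cs_def continuous_on_minus)
qed

lemma homotopic_normalized_sections:
  fixes F :: "real \<Rightarrow> (nat \<Rightarrow> real) \<Rightarrow> nat \<Rightarrow> real"
  assumes N: "N = 2*m"
    and cont: "continuous_on ({0..1} \<times> Sph N) (\<lambda>z. F (fst z) (snd z))"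
    and Rn: "\<And>t a. t \<in> {0..1} \<Longrightarrow> a \<in> Sph N \<Longrightarrow> F t a \<in> Rn N"
    and orth: "\<And>t a. t \<in> {0..1} \<Longrightarrow> a \<in> Sph N \<Longrightarrow> ip N a (F t a) = 0"
    and pos: "\<And>t a. t \<in> {0..1} \<Longrightarrow> a \<in> Sph N \<Longrightarrow> ip N (F t a) (F t a) > 0"
    and f: "\<And>a. a \<in> Sph N \<Longrightarrow> f a = (a, normalized N (F 0 a))"
    and g: "\<And>a. a \<in> Sph N \<Longrightarrow> g a = (a, normalized N (F 1 a))"
  shows "homotopic_with_canon (\<lambda>_. True) (Sph N) (Qt m) f g"
proof (rule homotopic_with_canon_intro[where h = "\<lambda>z. (snd z, normalized N (F (fst z) (snd z)))"])
  let ?S = "{0..1} \<times> Sph N"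
  have cF: "continuous_on ?S (\<lambda>z. F (fst z) (snd z) i)" for i
    by (rule continuous_on_product_then_coordinatewise[OF cont])
  have "continuous_on ?S (\<lambda>z. sqrt (ip N (F (fst z) (snd z)) (F (fst z) (snd z))))"
    unfolding ip_def by (intro continuous_intros cF)
  moreover have "\<forall>z\<in>?S. sqrt (ip N (F (fst z) (snd z)) (F (fst z) (snd z))) \<noteq> 0"
    using pos by (auto simp: less_le)
  ultimately have "continuous_on ?S (\<lambda>z. normalized N (F (fst z) (snd z)) i)" for i
    unfolding normalized_def by (intro continuous_on_divide cF)
  then have "continuous_on ?S (\<lambda>z. normalized N (F (fst z) (snd z)))"
    by (rule continuous_on_coordinatewise_then_product)
  then show "continuous_on ?S (\<lambda>z. (snd z, normalized N (F (fst z) (snd z))))"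
    by (rule continuous_on_Pair[OF continuous_on_snd[OF continuous_on_id]])
  show "(\<lambda>z. (snd z, normalized N (F (fst z) (snd z)))) ` ?S \<subseteq> Qt m"
  proof clarsimp
    fix t :: real and a assume "0 \<le> t" "t \<le> 1" "a \<in> Sph N"
    then have t: "t \<in> {0..1}" and a: "a \<in> Sph N" by auto
    have "ip N a (normalized N (F t a)) = 0"
      unfolding normalized_def ip_divide_right orth[OF t a] by simp
    then show "(a, normalized N (F t a)) \<in> Qt m"
      using a normalized_in_Sph[OF Rn[OF t a] pos[OF t a]] N by (simp add: Qt_def)
  qed
qed (simp_all add: f g)

definition twist :: "nat \<Rightarrow> rmat \<Rightarrow> (nat \<Rightarrow> real) \<Rightarrow> nat \<Rightarrow> real" where
  "twist N W a = (\<lambda>i. - mv N W (std_cs N (mv N (trm W) a)) i)"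

lemma twist_Rn: "twist N W a \<in> Rn N"
  by (simp add: twist_def Rn_def mv_def)

lemma ip_twist: "N = 2*m \<Longrightarrow> ip N a (twist N W a) = 0"
  unfolding twist_def ip_uminus_right ip_mv_right by (simp add: ip_std_cs)

lemma Sph_nonzero: "a \<in> Sph N \<Longrightarrow> a \<noteq> (\<lambda>_. 0)"
  by (auto simp: Sph_def ip_def)

lemma ip_twist_twist_pos:
  assumes N: "N = 2*m" and W: "detm N W \<noteq> 0" and a: "a \<in> Sph N"
  shows "ip N (twist N W a) (twist N W a) > 0"
proof -
  define y where "y = mv N (trm W) a"
  have "ip N (twist N W a) (twist N W a) \<noteq> 0"
  proof
    assume "ip N (twist N W a) (twist N W a) = 0"
    then have "ip N (mv N W (std_cs N y)) (mv N W (std_cs N y)) = 0"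
      by (simp add: twist_def y_def ip_uminus_uminus)
    then have "mv N W (std_cs N y) = (\<lambda>_. 0)" by (rule Rn_ip_self_eq_0[OF mv_Rn])
    then have "std_cs N y = (\<lambda>_. 0)"
      by (rule detm_nonzero_mv_eq_0[OF W, rotated]) (simp add: std_cs_def Rn_def)
    then have "ip N y y = 0" using ip_std_cs_std_cs[OF N, of y] by (simp add: ip_def)
    then have "mv N (trm W) a = (\<lambda>_. 0)" unfolding y_def by (rule Rn_ip_self_eq_0[OF mv_Rn])
    then have "a = (\<lambda>_. 0)"
      by (rule detm_nonzero_mv_eq_0[rotated 2]) (use W a in \<open>simp_all add: detm_trm Sph_def\<close>)
    then show False using Sph_nonzero[OF a] by simp
  qed
  then show ?thesis using ip_self_nonneg[of N "twist N W a"] by simp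
qed

lemma continuous_on_twist:
  assumes "\<And>i j. continuous_on S (\<lambda>z. W z i j)" "continuous_on S a"
  shows "continuous_on S (\<lambda>z. twist N (W z) (a z))"
proof -
  have "continuous_on S (\<lambda>z. mv N (W z) (std_cs N (mv N (trm (W z)) (a z))))"
    using assms by (intro continuous_on_mv continuous_on_std_cs) (simp_all add: trm_def)
  then have "continuous_on S (\<lambda>z. mv N (W z) (std_cs N (mv N (trm (W z)) (a z))) i)" for i
    by (rule continuous_on_product_then_coordinatewise)
  then have "continuous_on S (\<lambda>z. twist N (W z) (a z) i)" for i
    unfolding twist_def by (rule continuous_on_minus)
  then show ?thesis by (rule continuous_on_coordinatewise_then_product)
qed

lemma ip_mv_mv_trm_pos:
  assumes W: "detm N W \<noteq> 0" and a: "a \<in> Sph N"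
  shows "ip N a (mv N W (mv N (trm W) a)) > 0"
proof -
  have "mv N (trm W) a \<noteq> (\<lambda>_. 0)"
    using detm_nonzero_mv_eq_0[of N "trm W" a] W a Sph_nonzero[OF a] by (auto simp: detm_trm Sph_def)
  then have "ip N (mv N (trm W) a) (mv N (trm W) a) \<noteq> 0" using Rn_ip_self_eq_0[OF mv_Rn] by blast
  then show ?thesis using ip_self_nonneg[of N "mv N (trm W) a"] by (simp add: ip_mv_right)
qed

text \<open>The homotopy is \<open>t \<mapsto> J ((t - 1) a - t W W\<^sup>T a)\<close>, which ends at \<open>twist N W a\<close> because
  \<open>W\<close> intertwines; it never vanishes since \<open>\<langle>a, W W\<^sup>T a\<rangle> > 0\<close>.\<close>

lemma lam_homotopic_twist:
  assumes N: "N = 2*m" and J: "ocs N J" and W: "detm N W \<noteq> 0" and JW: "intertwines N J W"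
  shows "homotopic_with_canon (\<lambda>_. True) (Sph N) (Qt m) (lam m J) (\<lambda>a. (a, normalized N (twist N W a)))"
proof -
  define x where "x t a = (\<lambda>i. (t - 1) * a i + (- t) * mv N W (mv N (trm W) a) i)" for t :: real and a
  define F where "F t a = mv N J (x t a)" for t a
  have F_eq: "F t a = (\<lambda>i. (t - 1) * mv N J a i + t * twist N W a i)" for t a
    unfolding F_def x_def mv_linear using JW by (simp add: twist_def intertwines_def)
  show ?thesis
  proof (rule homotopic_normalized_sections[OF N, where F = F])
    let ?S = "{0..1} \<times> Sph N"
    have "continuous_on ?S (\<lambda>z::real \<times> _. mv N J (snd z))"
      "continuous_on ?S (\<lambda>z::real \<times> _. twist N W (snd z))"
      by (intro continuous_on_mv continuous_on_twist continuous_intros)+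
    then have "continuous_on ?S (\<lambda>z::real \<times> _. mv N J (snd z) i)"
      "continuous_on ?S (\<lambda>z::real \<times> _. twist N W (snd z) i)" for i
      by (auto intro: continuous_on_product_then_coordinatewise)
    then have "continuous_on ?S (\<lambda>z. F (fst z) (snd z) i)" for i
      unfolding F_eq by (intro continuous_intros)
    then show "continuous_on ?S (\<lambda>z. F (fst z) (snd z))"
      by (rule continuous_on_coordinatewise_then_product)
  next
    fix t :: real and a assume t: "t \<in> {0..1}" and a: "a \<in> Sph N"
    show "F t a \<in> Rn N" by (simp add: F_def)
    show "ip N a (F t a) = 0"
      unfolding F_eq ip_linear_right ip_twist[OF N] ocs_ip_self_mv[OF J] by simp
    have "ip N a (x t a) = (t - 1) - t * ip N a (mv N W (mv N (trm W) a))"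
      using a unfolding x_def ip_linear_right by (simp add: Sph_def)
    also have "\<dots> < 0"
    proof (cases "t = 0")
      case False
      then have "0 < t * ip N a (mv N W (mv N (trm W) a))"
        using t ip_mv_mv_trm_pos[OF W a] by simp
      then show ?thesis using t by simp
    qed simp
    finally have "ip N a (x t a) \<noteq> ip N a (\<lambda>_. 0)" by (simp add: ip_def)
    then have "ip N (x t a) (x t a) \<noteq> 0"
      using ip_cong[of N a a "x t a" "\<lambda>_. 0"] ip_self_eq_0D by blast
    then show "ip N (F t a) (F t a) > 0"
      using ip_self_nonneg[of N "x t a"] unfolding F_def ocs_ip_mv[OF J] by simp
  next
    fix a assume a: "a \<in> Sph N"
    have "ip N (F 0 a) (F 0 a) = 1"
      using a by (simp add: F_eq ip_uminus_uminus ocs_ip_mv[OF J] Sph_def)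
    then show "lam m J a = (a, normalized N (F 0 a))"
      by (simp add: normalized_def F_eq lam_def N)
  qed (simp add: F_eq)
qed

lemma twist_homotopic_path_component:
  assumes N: "N = 2*m" and WV: "path_component (GLm N) W V"
  shows "homotopic_with_canon (\<lambda>_. True) (Sph N) (Qt m)
           (\<lambda>a. (a, normalized N (twist N W a))) (\<lambda>a. (a, normalized N (twist N V a)))"
proof -
  obtain g where g: "path g" "path_image g \<subseteq> GLm N" "pathstart g = W" "pathfinish g = V"
    using WV unfolding path_component_def by blast
  have "continuous_on {0..1} (\<lambda>t. g t i j)" for i j
    using g(1) unfolding path_def
    by (rule continuous_on_product_then_coordinatewise[OF continuous_on_product_then_coordinatewise])
  then have "continuous_on ({0..1} \<times> Sph N) (\<lambda>z::real \<times> (nat \<Rightarrow> real). g (fst z) i j)" for i j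
    by (rule continuous_on_compose2) (auto intro: continuous_intros)
  then have cont: "continuous_on ({0..1} \<times> Sph N) (\<lambda>z. twist N (g (fst z)) (snd z))"
    by (intro continuous_on_twist continuous_intros)
  show ?thesis
  proof (rule homotopic_normalized_sections[OF N cont])
    fix t :: real and a assume t: "t \<in> {0..1}" and a: "a \<in> Sph N"
    show "twist N (g t) a \<in> Rn N" by (rule twist_Rn)
    show "ip N a (twist N (g t) a) = 0" by (rule ip_twist[OF N])
    have "detm N (g t) \<noteq> 0" using g(2) t unfolding path_image_def GLm_def by blast
    then show "ip N (twist N (g t) a) (twist N (g t) a) > 0"
      by (rule ip_twist_twist_pos[OF N _ a])
  qed (use g in \<open>simp_all add: pathstart_def pathfinish_def\<close>)
qed

lemma lam_homotopic_intertwiners: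
  assumes N: "N = 2*m" and J: "ocs N J" and K: "ocs N K"
    and JW: "intertwines N J W" and KV: "intertwines N K V"
    and WV: "path_component (GLm N) W V"
  shows "homotopic_with_canon (\<lambda>_. True) (Sph N) (Qt m) (lam m J) (lam m K)"
proof -
  have W: "detm N W \<noteq> 0" and V: "detm N V \<noteq> 0"
    using path_component_mem[OF WV] by (auto simp: GLm_def)
  show ?thesis
    using homotopic_with_trans[OF lam_homotopic_twist[OF N J W JW]
        homotopic_with_trans[OF twist_homotopic_path_component[OF N WV]
          homotopic_with_symD[OF lam_homotopic_twist[OF N K V KV]]]] .
qed

section \<open>The two path components of \<open>GL\<close>\<close>

lemma path_component_GLmI:
  assumes "\<And>i j. continuous_on {0..1} (\<lambda>t::real. g t i j)"
    and "\<And>t. t \<in> {0..1} \<Longrightarrow> detm N (g t) \<noteq> 0"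
    and "g 0 = A" "g 1 = B"
  shows "path_component (GLm N) A B"
  unfolding path_component_def
proof (intro exI conjI)
  show "path g" unfolding path_def
    by (intro continuous_on_coordinatewise_then_product assms(1))
  show "path_image g \<subseteq> GLm N" using assms(2) by (auto simp: path_image_def GLm_def)
qed (use assms in \<open>simp_all add: pathstart_def pathfinish_def\<close>)

lemma path_component_GLm_image:
  assumes AB: "path_component (GLm N) A B"
    and h: "continuous_on UNIV (h :: rmat \<Rightarrow> rmat)"
    and hGL: "\<And>X. detm N X \<noteq> 0 \<Longrightarrow> detm N' (h X) \<noteq> 0"
  shows "path_component (GLm N') (h A) (h B)"
proof -
  obtain g where g: "path g" "path_image g \<subseteq> GLm N" "pathstart g = A" "pathfinish g = B"
    using AB unfolding path_component_def by blast
  show ?thesis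
    unfolding path_component_def
  proof (intro exI conjI)
    show "path (h \<circ> g)" by (rule path_continuous_image[OF g(1) continuous_on_subset[OF h]]) auto
    show "path_image (h \<circ> g) \<subseteq> GLm N'" using g(2) hGL by (auto simp: path_image_def GLm_def)
  qed (use g in \<open>simp_all add: pathstart_def pathfinish_def\<close>)
qed

lemma path_component_row_add:
  assumes "k < N" "l < N" "k \<noteq> l" "detm N A \<noteq> 0"
  shows "path_component (GLm N) A (row_add c k l A)"
proof (rule path_component_GLmI[where g = "\<lambda>t. row_add (t * c) k l A"])
  show "continuous_on {0..1} (\<lambda>t. row_add (t * c) k l A i j)" for i j
    by (cases "i = k") (simp_all add: row_add_def continuous_intros)
  show "detm N (row_add (t * c) k l A) \<noteq> 0" for t using assms by (simp add: detm_row_add)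
qed (simp_all add: row_add_def fun_eq_iff)

lemma path_component_row_scale:
  assumes "k < N" "c > 0" "detm N A \<noteq> 0"
  shows "path_component (GLm N) A (row_scale k c A)"
proof (rule path_component_GLmI[where g = "\<lambda>t. row_scale k (1 - t + t * c) A"])
  show "continuous_on {0..1} (\<lambda>t. row_scale k (1 - t + t * c) A i j)" for i j
    by (cases "i = k") (simp_all add: row_scale_def continuous_intros)
  fix t :: real assume "t \<in> {0..1}"
  then have "1 - t + t * c > 0"
    using assms(2) by (cases "t = 1") (auto intro: add_pos_nonneg)
  then show "detm N (row_scale k (1 - t + t * c) A) \<noteq> 0" using assms by (simp add: detm_row_scale)
qed (simp_all add: row_scale_def fun_eq_iff)

lemma path_component_GLm_cong:
  assumes "detm N A \<noteq> 0" "\<And>i j. i < N \<Longrightarrow> j < N \<Longrightarrow> A i j = B i j"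
  shows "path_component (GLm N) A B"
proof (rule path_component_GLmI[where g = "\<lambda>t i j. (1 - t) * A i j + t * B i j"])
  have "detm N (\<lambda>i j. (1 - t) * A i j + t * B i j) = detm N A" for t
    by (rule detm_cong) (simp add: assms(2) algebra_simps)
  then show "detm N (\<lambda>i j. (1 - t) * A i j + t * B i j) \<noteq> 0" for t using assms(1) by simp
qed (auto intro!: continuous_intros)

definition row_rotate :: "nat \<Rightarrow> nat \<Rightarrow> rmat \<Rightarrow> rmat" where
  "row_rotate k l A = (\<lambda>i j. if i = k then A l j else if i = l then - A k j else A i j)"

lemma row_rotate_eq_row_adds:
  "k \<noteq> l \<Longrightarrow> row_rotate k l A = row_add 1 k l (row_add (-1) l k (row_add 1 k l A))"
  by (auto simp: row_add_def row_rotate_def fun_eq_iff)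

lemma path_component_row_rotate:
  assumes "k < N" "l < N" "k \<noteq> l" "detm N A \<noteq> 0"
  shows "path_component (GLm N) A (row_rotate k l A) \<and> detm N (row_rotate k l A) = detm N A"
proof -
  let ?A1 = "row_add 1 k l A"
  let ?A2 = "row_add (-1) l k ?A1"
  have d1: "detm N ?A1 = detm N A" and d2: "detm N ?A2 = detm N A"
    using assms by (simp_all add: detm_row_add)
  have "path_component (GLm N) A ?A1" "path_component (GLm N) ?A1 ?A2"
    "path_component (GLm N) ?A2 (row_add 1 k l ?A2)"
    using assms d1 d2 by (auto intro: path_component_row_add)
  then show ?thesis
    using assms d2 row_rotate_eq_row_adds[OF assms(3)]
    by (auto simp: detm_row_add intro: path_component_trans)
qed

text \<open>Rotating twice by a quarter turn negates two rows without leaving the component.\<close>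

lemma path_component_rows_neg:
  assumes "k < N" "l < N" "k \<noteq> l" "detm N A \<noteq> 0"
  shows "path_component (GLm N) A (\<lambda>i j. if i = k \<or> i = l then - A i j else A i j)
       \<and> detm N (\<lambda>i j. if i = k \<or> i = l then - A i j else A i j) = detm N A"
proof -
  let ?R = "row_rotate k l A"
  have R: "path_component (GLm N) A ?R" "detm N ?R = detm N A"
    using path_component_row_rotate[OF assms] by auto
  then have "path_component (GLm N) ?R (row_rotate k l ?R)" "detm N (row_rotate k l ?R) = detm N A"
    using path_component_row_rotate[OF assms(1-3), of ?R] assms(4) by auto
  moreover have "row_rotate k l ?R = (\<lambda>i j. if i = k \<or> i = l then - A i j else A i j)"
    using assms(3) by (auto simp: row_rotate_def fun_eq_iff)
  ultimately show ?thesis using R(1) path_component_trans by metis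
qed

definition leading_id_cols :: "nat \<Rightarrow> nat \<Rightarrow> rmat \<Rightarrow> bool" where
  "leading_id_cols N k A \<longleftrightarrow> (\<forall>i<N. \<forall>j<k. A i j = (if i = j then 1 else 0))"

lemma leading_id_cols_pivot:
  assumes A: "leading_id_cols N k A" and k: "k < N" and d: "detm N A \<noteq> 0"
  shows "\<exists>r. k \<le> r \<and> r < N \<and> A r k \<noteq> 0"
proof (rule ccontr)
  assume "\<not> ?thesis"
  then have z: "\<And>r. k \<le> r \<Longrightarrow> r < N \<Longrightarrow> A r k = 0" by auto
  txt \<open>Then column \<open>k\<close> is a combination of the first \<open>k\<close> columns, which are unit vectors.\<close>
  define v where "v = (\<lambda>j. if j = k then 1 else if j < k then - A j k else (0::real))"
  have "mv N A v = (\<lambda>_. 0)"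
  proof
    fix i
    have "(\<Sum>j<N. A i j * v j)
        = (\<Sum>j<N. (if j = k then A i k else 0) - (if j = i then (if i < k then A i k else 0) else 0))"
      if "i < N"
      using A that by (intro sum.cong refl) (auto simp: v_def leading_id_cols_def)
    then show "mv N A v i = 0"
      using k z[of i] by (auto simp: mv_def sum_subtractf)
  qed
  moreover have "v \<in> Rn N" "v \<noteq> (\<lambda>_. 0)" using k by (auto simp: v_def Rn_def fun_eq_iff)
  ultimately show False using detm_nonzero_mv_eq_0[OF d] by blast
qed

lemma path_component_nonzero_pivot:
  assumes A: "leading_id_cols N k A" and k: "k < N" and d: "detm N A \<noteq> 0"
  shows "\<exists>A'. path_component (GLm N) A A' \<and> detm N A' = detm N A \<and> leading_id_cols N k A' \<and> A' k k \<noteq> 0"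
proof (cases "A k k = 0")
  case False
  moreover have "path_component (GLm N) A A" using d by (simp add: path_component_refl GLm_def)
  ultimately show ?thesis using A by blast
next
  case True
  obtain r where r: "k \<le> r" "r < N" "A r k \<noteq> 0" using leading_id_cols_pivot[OF A k d] by blast
  then have rk: "k \<noteq> r" using True by auto
  have "leading_id_cols N k (row_add 1 k r A)"
    using A k r(1,2) by (auto simp: leading_id_cols_def row_add_def)
  moreover have "row_add 1 k r A k k \<noteq> 0" using True r by (simp add: row_add_def)
  ultimately show ?thesis
    using path_component_row_add[OF k r(2) rk d] detm_row_add[OF k r(2) rk] by blast
qed

lemma path_component_clear_column:
  assumes A: "leading_id_cols N k A" and k: "k < N" and d: "detm N A \<noteq> 0" and p: "A k k \<noteq> 0"
  shows "m \<le> N \<Longrightarrow> \<exists>B. path_component (GLm N) A B \<and> detm N B = detm N A \<and> leading_id_cols N k B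
            \<and> B k k = A k k \<and> (\<forall>i<m. i \<noteq> k \<longrightarrow> B i k = 0)"
proof (induction m)
  case 0
  have "path_component (GLm N) A A" using d by (simp add: path_component_refl GLm_def)
  then show ?case using A by blast
next
  case (Suc m)
  then obtain B where B: "path_component (GLm N) A B" "detm N B = detm N A" "leading_id_cols N k B"
    "B k k = A k k" "\<forall>i<m. i \<noteq> k \<longrightarrow> B i k = 0" by auto
  show ?case
  proof (cases "m = k \<or> B m k = 0")
    case True
    then show ?thesis using B less_Suc_eq by metis
  next
    case False
    then have m: "m < N" "m \<noteq> k" using Suc.prems by auto
    let ?B = "row_add (- (B m k / B k k)) m k B"
    have "path_component (GLm N) A ?B"
      using B(1,2) d path_component_row_add[OF m(1) k m(2)] path_component_trans by metis
    moreover have "detm N ?B = detm N A" using detm_row_add[OF m(1) k m(2)] B(2) by simp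
    moreover have "leading_id_cols N k ?B"
      using B(3) k by (auto simp: row_add_def leading_id_cols_def)
    moreover have "\<forall>i<Suc m. i \<noteq> k \<longrightarrow> ?B i k = 0"
      using B(4,5) p by (auto simp: row_add_def less_Suc_eq)
    ultimately show ?thesis using B(4) m(2) by (auto simp: row_add_def)
  qed
qed

lemma path_component_normalize_column:
  assumes B: "leading_id_cols N k B" and k: "k < N" and col: "\<And>i. i < N \<Longrightarrow> i \<noteq> k \<Longrightarrow> B i k = 0"
    and p: "B k k > 0" and d: "detm N B > 0"
  shows "\<exists>B'. path_component (GLm N) B B' \<and> detm N B' > 0 \<and> leading_id_cols N (Suc k) B'"
proof -
  let ?B = "row_scale k (1 / B k k) B"
  have "path_component (GLm N) B ?B" using d p by (intro path_component_row_scale k) auto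
  moreover have "detm N ?B > 0" using d p by (simp add: detm_row_scale k)
  moreover have "leading_id_cols N (Suc k) ?B"
    using B col p by (auto simp: row_scale_def leading_id_cols_def less_Suc_eq)
  ultimately show ?thesis by blast
qed

lemma path_component_leading_id_cols_Suc:
  assumes A: "leading_id_cols N k A" and k: "k < N" and d: "detm N A > 0"
  shows "\<exists>B. path_component (GLm N) A B \<and> detm N B > 0 \<and> leading_id_cols N (Suc k) B"
proof -
  obtain A1 where A1: "path_component (GLm N) A A1" "detm N A1 = detm N A" "leading_id_cols N k A1"
      "A1 k k \<noteq> 0"
    using path_component_nonzero_pivot[OF A k] d by auto
  obtain B where B: "path_component (GLm N) A1 B" "detm N B = detm N A1" "leading_id_cols N k B"
      "B k k = A1 k k" "\<forall>i<N. i \<noteq> k \<longrightarrow> B i k = 0"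
    using path_component_clear_column[OF A1(3) k _ A1(4), of N] A1(2) d by auto
  have AB: "path_component (GLm N) A B" by (rule path_component_trans[OF A1(1) B(1)])
  have dB: "detm N B > 0" using B(2) A1(2) d by simp
  consider "B k k > 0" | "B k k < 0" "Suc k < N" | "B k k < 0" "Suc k = N"
    using B(4) A1(4) k by linarith
  then show ?thesis
  proof cases
    case 1
    then show ?thesis
      using path_component_normalize_column[OF B(3) k _ 1 dB] B(5) path_component_trans[OF AB] by blast
  next
    case 2
    txt \<open>Negating rows \<open>k\<close> and \<open>k + 1\<close> makes the pivot positive.\<close>
    let ?B = "\<lambda>i j. if i = k \<or> i = Suc k then - B i j else B i j"
    have neg: "path_component (GLm N) B ?B" "detm N ?B = detm N B"
      using path_component_rows_neg[OF k 2(2), of B] dB by auto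
    have lead: "leading_id_cols N k ?B" using B(3) by (auto simp: leading_id_cols_def)
    have col: "?B i k = 0" if "i < N" "i \<noteq> k" for i using B(5) that 2 by auto
    have "?B k k > 0" "detm N ?B > 0" using 2(1) neg(2) dB by auto
    then obtain B' where
      "path_component (GLm N) ?B B'" "detm N B' > 0" "leading_id_cols N (Suc k) B'"
      using path_component_normalize_column[OF lead k col] by blast
    then show ?thesis using path_component_trans[OF path_component_trans[OF AB neg(1)]] by blast
  next
    case 3
    txt \<open>Then \<open>B\<close> is the identity except for \<open>B k k\<close>, so \<open>detm N B = B k k < 0\<close>.\<close>
    have "detm N B = detm N (row_scale k (B k k) (idm N))"
      using B(3,5) 3(2) by (intro detm_cong) (auto simp: row_scale_def idm_def leading_id_cols_def less_Suc_eq)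
    then show ?thesis using k 3(1) dB by (simp add: detm_row_scale detm_idm)
  qed
qed

lemma path_component_leading_id_cols:
  assumes d: "detm N A > 0"
  shows "k \<le> N \<Longrightarrow> \<exists>B. path_component (GLm N) A B \<and> detm N B > 0 \<and> leading_id_cols N k B"
proof (induction k)
  case 0
  have "path_component (GLm N) A A" using d by (simp add: path_component_refl GLm_def)
  then show ?case using d by (auto simp: leading_id_cols_def)
next
  case (Suc k)
  then obtain B where B: "path_component (GLm N) A B" "detm N B > 0" "leading_id_cols N k B" by auto
  then show ?case
    using path_component_leading_id_cols_Suc[OF B(3) _ B(2)] Suc.prems path_component_trans[OF B(1)]
    by (metis Suc_le_lessD)
qed

lemma path_component_GLm_idm:
  assumes "detm N A > 0"
  shows "path_component (GLm N) A (idm N)"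
proof -
  obtain B where B: "path_component (GLm N) A B" "detm N B > 0" "leading_id_cols N N B"
    using path_component_leading_id_cols[OF assms, of N] by auto
  have "path_component (GLm N) B (idm N)"
    using B(2,3) by (intro path_component_GLm_cong) (auto simp: leading_id_cols_def idm_def)
  then show ?thesis using path_component_trans[OF B(1)] by blast
qed

lemma continuous_on_row_scale: "continuous_on UNIV (row_scale k c)"
proof (intro continuous_on_coordinatewise_then_product)
  fix i j
  have "continuous_on UNIV (\<lambda>X :: rmat. X i j)"
    by (rule continuous_on_product_then_coordinatewise[OF
          continuous_on_product_then_coordinatewise[OF continuous_on_id]])
  then show "continuous_on UNIV (\<lambda>X. row_scale k c X i j)"
    by (cases "i = k") (simp_all add: row_scale_def continuous_on_mult_left)
qed

lemma path_component_GLm_same_sign: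
  assumes N: "0 < N" and AB: "0 < detm N A * detm N B"
  shows "path_component (GLm N) A B"
proof (cases "detm N A > 0")
  case True
  then have "detm N B > 0" using AB zero_less_mult_pos by blast
  then show ?thesis
    using path_component_GLm_idm True path_component_sym path_component_trans by metis
next
  case False
  txt \<open>Flip the sign of the first row, connect to the identity, and flip back.\<close>
  let ?h = "row_scale 0 (-1)"
  have "detm N A < 0" "detm N B < 0" using False AB by (auto simp: zero_less_mult_iff)
  then have "detm N (?h A) > 0" "detm N (?h B) > 0" using N by (simp_all add: detm_row_scale)
  then have "path_component (GLm N) (?h A) (?h B)"
    using path_component_GLm_idm path_component_sym path_component_trans by metis
  then have "path_component (GLm N) (?h (?h A)) (?h (?h B))"
    by (rule path_component_GLm_image[OF _ continuous_on_row_scale]) (simp add: detm_row_scale N)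
  moreover have "?h (?h X) = X" for X by (simp add: row_scale_def fun_eq_iff)
  ultimately show ?thesis by simp
qed

section \<open>Double suspension\<close>

lemma mv_block2:
  "mv (Suc (Suc N)) (block2 N A b00 b01 b10 b11) y = (\<lambda>i. if i < N then mv N A y i
     else if i = N then b00 * y N + b01 * y (Suc N)
     else if i = Suc N then b10 * y N + b11 * y (Suc N) else 0)"
proof
  fix i
  have "(\<Sum>k<N. block2 N A b00 b01 b10 b11 i k * y k) = (if i < N then (\<Sum>k<N. A i k * y k) else 0)"
    by (cases "i < N") (auto simp: block2_def intro!: sum.neutral)
  then show "mv (Suc (Suc N)) (block2 N A b00 b01 b10 b11) y i = (if i < N then mv N A y i
     else if i = N then b00 * y N + b01 * y (Suc N)
     else if i = Suc N then b10 * y N + b11 * y (Suc N) else 0)"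
    unfolding mv_def by (auto simp: block2_def)
qed

lemma ocs_block2_rot:
  assumes J: "ocs N J"
  shows "ocs (Suc (Suc N)) (block2 N J 0 (-1) 1 0)"
proof -
  let ?E = "block2 N J 0 (-1) 1 0"
  have sq: "\<And>i j. i < N \<Longrightarrow> j < N \<Longrightarrow> (\<Sum>k<N. J i k * J k j) = (if i = j then -1 else 0)"
    and orth: "\<And>i j. i < N \<Longrightarrow> j < N \<Longrightarrow> (\<Sum>k<N. J k i * J k j) = (if i = j then 1 else 0)"
    using J unfolding ocs_def by blast+
  have inner_sq: "(\<Sum>k<N. ?E i k * ?E k j) = (if i < N \<and> j < N then (\<Sum>k<N. J i k * J k j) else 0)"
    and inner_orth: "(\<Sum>k<N. ?E k i * ?E k j) = (if i < N \<and> j < N then (\<Sum>k<N. J k i * J k j) else 0)"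
    for i j by (cases "i < N \<and> j < N"; auto simp: block2_def intro!: sum.neutral)+
  have col_N: "?E i N = (if i = Suc N then 1 else 0)" and col_SN: "?E i (Suc N) = (if i = N then -1 else 0)"
    and row_N: "?E N j = (if j = Suc N then -1 else 0)" and row_SN: "?E (Suc N) j = (if j = N then 1 else 0)"
    for i j by (simp_all add: block2_def)
  have "(\<Sum>k<Suc (Suc N). ?E i k * ?E k j) = (if i = j then -1 else 0)
      \<and> (\<Sum>k<Suc (Suc N). ?E k i * ?E k j) = (if i = j then 1 else 0)"
    if "i < Suc (Suc N)" "j < Suc (Suc N)" for i j
  proof -
    have "i < N \<or> i = N \<or> i = Suc N" "j < N \<or> j = N \<or> j = Suc N" using that by auto
    then show ?thesis
      unfolding sum.lessThan_Suc inner_sq inner_orth col_N col_SN row_N row_SN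
      using sq[of i j] orth[of i j] by auto
  qed
  then show ?thesis unfolding ocs_def by blast
qed

lemma intertwines_block2:
  assumes J: "ocs (2*n) J"
  shows "intertwines (Suc (Suc (2*n))) (block2 (2*n) J 0 (-1) 1 0)
           (block2 (2*n) (cbasis_mat (2*n) J w) 1 0 0 1)"
proof (rule intertwinesI_columns)
  show "Suc (Suc (2*n)) = 2 * Suc n" by simp
  show "ocs (Suc (Suc (2*n))) (block2 (2*n) J 0 (-1) 1 0)" by (rule ocs_block2_rot[OF J])
  fix p i assume p: "p < Suc n" and i: "i < Suc (Suc (2*n))"
  let ?W = "block2 (2*n) (cbasis_mat (2*n) J w) 1 0 0 1"
  show "?W i (2*p+1) = mv (Suc (Suc (2*n))) (block2 (2*n) J 0 (-1) 1 0) (\<lambda>j. ?W j (2*p)) i"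
  proof (cases "p < n")
    case True
    then have "mv (2*n) J (\<lambda>j. ?W j (2*p)) = mv (2*n) J (w p)"
      by (intro mv_cong) (simp add: block2_def cbasis_mat_def)
    then show ?thesis
      unfolding mv_block2 using True i by (auto simp: block2_def cbasis_mat_def mv_def)
  next
    case False
    then have "p = n" using p by simp
    moreover have "mv (2*n) J (\<lambda>j. ?W j (2*n)) = (\<lambda>_. 0)"
      unfolding mv_def by (auto simp: block2_def intro!: sum.neutral)
    ultimately show ?thesis unfolding mv_block2 using i by (auto simp: block2_def)
  qed
qed

lemma lam_block2_rot_homotopic:
  assumes J: "ocs (2*n) J" and J': "ocs (2*n+2) J'"
    and sign: "0 < detm (2*n) (cbasis_mat (2*n) J w) * detm (2*n+2) (cbasis_mat (2*n+2) J' w')"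
  shows "homotopic_with_canon (\<lambda>_. True) (Sph (2*n+2)) (Qt (Suc n))
           (lam (Suc n) (block2 (2*n) J 0 (-1) 1 0)) (lam (Suc n) J')"
proof -
  have N: "2*n+2 = 2 * Suc n" by simp
  have "path_component (GLm (2*n+2)) (block2 (2*n) (cbasis_mat (2*n) J w) 1 0 0 1)
          (cbasis_mat (2*n+2) J' w')"
    using sign by (intro path_component_GLm_same_sign) (simp_all add: detm_block2_id)
  moreover have "intertwines (2*n+2) (block2 (2*n) J 0 (-1) 1 0)
      (block2 (2*n) (cbasis_mat (2*n) J w) 1 0 0 1)"
    using intertwines_block2[OF J] by simp
  moreover have "ocs (2*n+2) (block2 (2*n) J 0 (-1) 1 0)" using ocs_block2_rot[OF J] by simp
  ultimately show ?thesis
    using lam_homotopic_intertwiners[OF N] J' intertwines_cbasis_mat[OF N J'] by blast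
qed

lemma Sph_Suc_Suc_rescale:
  assumes a: "a \<in> Sph (Suc (Suc N))" and i: "i < N"
  shows "sqrt (1 - (a N)\<^sup>2 - (a (Suc N))\<^sup>2) * (a i / sqrt (1 - (a N)\<^sup>2 - (a (Suc N))\<^sup>2)) = a i"
proof -
  have "1 - (a N)\<^sup>2 - (a (Suc N))\<^sup>2 = ip N a a"
    using a unfolding Sph_def ip_Suc_Suc by (simp add: power2_eq_square)
  then show ?thesis using ip_self_eq_0D[OF _ i] by (cases "ip N a a = 0") auto
qed

text \<open>With \<open>v = a / s\<close> on the first \<open>2n\<close> coordinates, this is \<open>\<iota> (\<Sigma>\<^sup>2 \<lambda>\<^sub>J)\<close> at \<open>a\<close>.\<close>

lemma iota_rescaled_lam:
  assumes a: "a \<in> Rn (Suc (Suc (2*n)))" and sv: "\<And>j. j < 2*n \<Longrightarrow> s * v j = a j"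
  shows "iota n (((\<lambda>i. s * v i), (\<lambda>i. s * - mv (2*n) J v i)), (a (2*n), a (Suc (2*n))))
         = lam (Suc n) (block2 (2*n) J 0 (-1) 1 0) a"
proof -
  have "(\<lambda>i. s * mv (2*n) J v i) = mv (2*n) J a"
    unfolding mv_scale[symmetric] using sv by (intro mv_cong) simp
  then have Jv: "s * - mv (2*n) J v i = - mv (2*n) J a i" for i by (simp add: fun_eq_iff)
  have "emb n (\<lambda>i. s * v i) (a (2*n)) (a (Suc (2*n))) = a"
  proof
    fix i
    show "emb n (\<lambda>i. s * v i) (a (2*n)) (a (Suc (2*n))) i = a i"
      using a sv[of i] by (cases "i < Suc (Suc (2*n))") (auto simp: emb_def Rn_def less_Suc_eq)
  qed
  moreover have "emb n (\<lambda>i. - mv (2*n) J a i) (a (Suc (2*n))) (- a (2*n))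
      = (\<lambda>i. - mv (2 * Suc n) (block2 (2*n) J 0 (-1) 1 0) a i)"
    by (auto simp: emb_def mv_block2 mult_2 fun_eq_iff)
  ultimately show ?thesis unfolding iota_def lam_def Jv by simp
qed

lemma iota_sigma2_lam:
  assumes a: "a \<in> Sph (2*n+2)"
  shows "iota n (sigma2 n (lam n J) a) = lam (Suc n) (block2 (2*n) J 0 (-1) 1 0) a"
proof -
  define s where "s = sqrt (1 - (a (2*n))\<^sup>2 - (a (2*n+1))\<^sup>2)"
  define u where "u = (\<lambda>i. if i < 2*n then a i / s else 0)"
  have "sigma2 n (lam n J) a = (((\<lambda>i. s * u i), (\<lambda>i. s * - mv (2*n) J u i)), (a (2*n), a (Suc (2*n))))"
    unfolding sigma2_def Let_def s_def[symmetric] u_def[symmetric] by (simp add: lam_def)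
  moreover have "s * u j = a j" if "j < 2*n" for j
    using Sph_Suc_Suc_rescale[of a "2*n" j] a that by (simp add: u_def s_def)
  moreover have "a \<in> Rn (Suc (Suc (2*n)))" using a by (simp add: Sph_def)
  ultimately show ?thesis using iota_rescaled_lam by simp
qed

lemma iota_sigma2_lam_refl0:
  assumes a: "a \<in> Sph (2*n+2)" and n: "0 < n"
  shows "iota n (sigma2 n (lam n J \<circ> refl0) a) = lam (Suc n) (block2 (2*n) J 0 (-1) 1 0) (refl0 a)"
proof -
  define s where "s = sqrt (1 - (a (2*n))\<^sup>2 - (a (2*n+1))\<^sup>2)"
  define u where "u = (\<lambda>i. if i < 2*n then a i / s else 0)"
  have "sigma2 n (lam n J \<circ> refl0) a
      = (((\<lambda>i. s * refl0 u i), (\<lambda>i. s * - mv (2*n) J (refl0 u) i)), (refl0 a (2*n), refl0 a (Suc (2*n))))"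
    using n unfolding sigma2_def Let_def s_def[symmetric] u_def[symmetric] by (simp add: lam_def refl0_def)
  moreover have "s * refl0 u j = refl0 a j" if "j < 2*n" for j
    using Sph_Suc_Suc_rescale[of a "2*n"] a that n by (simp add: u_def s_def refl0_def)
  moreover have "refl0 a \<in> Rn (Suc (Suc (2*n)))" using a by (simp add: Sph_def Rn_def refl0_def)
  ultimately show ?thesis using iota_rescaled_lam by simp
qed

lemma refl0_Sph:
  assumes "a \<in> Sph N" "0 < N"
  shows "refl0 a \<in> Sph N"
proof -
  have "ip N (refl0 a) (refl0 a) = ip N a a"
    unfolding ip_def by (rule sum.cong) (auto simp: refl0_def)
  then show ?thesis using assms by (simp add: Sph_def Rn_def refl0_def)
qed

lemma continuous_on_refl0: "continuous_on S refl0"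
proof (rule continuous_on_coordinatewise_then_product)
  fix i
  have "continuous_on S (\<lambda>x::nat \<Rightarrow> real. x j)" for j
    by (rule continuous_on_product_then_coordinatewise[OF continuous_on_id])
  then show "continuous_on S (\<lambda>x. refl0 x i)"
    by (cases "i = 0") (simp_all add: refl0_def continuous_on_minus)
qed

theorem lemmaA1:
  fixes n :: nat and Jp Jm Jp' Jm' :: "nat \<Rightarrow> nat \<Rightarrow> real"
  assumes "n \<ge> 2"
    and "ocs (2*n) Jp" and "pos_compat (2*n) Jp"
    and "ocs (2*n+2) Jp'" and "pos_compat (2*n+2) Jp'"
    and "ocs (2*n) Jm" and "neg_compat (2*n) Jm"
    and "ocs (2*n+2) Jm'" and "neg_compat (2*n+2) Jm'"
  shows "homotopic_with_canon (\<lambda>_. True) (Sph (2*n+2)) (Qt (Suc n))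
           (iota n \<circ> sigma2 n (lam n Jp)) (lam (Suc n) Jp') \<and>
         homotopic_with_canon (\<lambda>_. True) (Sph (2*n+2)) (Qt (Suc n))
           (iota n \<circ> sigma2 n (lam n Jm \<circ> refl0)) (lam (Suc n) Jm' \<circ> refl0)"
proof
  obtain wp wp' wm wm' where
    "0 < detm (2*n) (cbasis_mat (2*n) Jp wp) * detm (2*n+2) (cbasis_mat (2*n+2) Jp' wp')"
    "0 < detm (2*n) (cbasis_mat (2*n) Jm wm) * detm (2*n+2) (cbasis_mat (2*n+2) Jm' wm')"
    using assms(3,5,7,9) unfolding pos_compat_def neg_compat_def by (meson mult_pos_pos mult_neg_neg)
  then have pos: "homotopic_with_canon (\<lambda>_. True) (Sph (2*n+2)) (Qt (Suc n))
                    (lam (Suc n) (block2 (2*n) Jp 0 (-1) 1 0)) (lam (Suc n) Jp')"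
    and neg: "homotopic_with_canon (\<lambda>_. True) (Sph (2*n+2)) (Qt (Suc n))
                    (lam (Suc n) (block2 (2*n) Jm 0 (-1) 1 0)) (lam (Suc n) Jm')"
    using lam_block2_rot_homotopic assms(2,4,6,8) by blast+
  show "homotopic_with_canon (\<lambda>_. True) (Sph (2*n+2)) (Qt (Suc n))
          (iota n \<circ> sigma2 n (lam n Jp)) (lam (Suc n) Jp')"
    by (rule homotopic_with_eq[OF pos]) (simp_all add: iota_sigma2_lam)
  have "homotopic_with_canon (\<lambda>_. True) (Sph (2*n+2)) (Qt (Suc n))
          (lam (Suc n) (block2 (2*n) Jm 0 (-1) 1 0) \<circ> refl0) (lam (Suc n) Jm' \<circ> refl0)"
    by (rule homotopic_with_compose_continuous_right[OF neg continuous_on_refl0]) (auto intro: refl0_Sph)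
  then show "homotopic_with_canon (\<lambda>_. True) (Sph (2*n+2)) (Qt (Suc n))
          (iota n \<circ> sigma2 n (lam n Jm \<circ> refl0)) (lam (Suc n) Jm' \<circ> refl0)"
    by (rule homotopic_with_eq) (use assms(1) in \<open>simp_all add: iota_sigma2_lam_refl0\<close>)
qed

end
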